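(* Let $p\in\mathcal{X}$. Then there exists a unique forkless polynomial $q\in\mathcal{X}$ such that $p\equiv q\pmod{\mathcal{J}}$.
   Context: Let $\mathbf{k}$ be a commutative ring, let $\beta,\alpha\in\mathbf{k}$, and let $n$ be a positive integer. Let $\mathcal{X}=\mathbf{k}[x_{i,j}\mid 1\le i<j\le n]$ be the polynomial ring over $\mathbf{k}$ in the indeterminates $x_{i,j}$, and $\mathfrak{M}$ the set of monomials in them. Let $\mathcal{J}$ be the ideal of $\mathcal{X}$ generated by all elements $x_{i,j}x_{j,k}-x_{i,k}(x_{i,j}+x_{j,k}+\beta)-\alpha$ for $1\le i<j<k\le n$. A monomial $\mathfrak{m}\in\mathfrak{M}$ is forkless if there is no triple $1\le i<j<k\le n$ with $x_{i,j}x_{i,k}\mid\mathfrak{m}$; a polynomial is forkless if it is a $\mathbf{k}$-linear combination of forkless monomials. *)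

theory Defs
  imports "HOL-Library.Poly_Mapping"
begin

text \<open>Variables x_{i,j} are indexed by pairs (i,j); monomials are finitely supported
  exponent vectors; polynomials are finitely supported coefficient functions on monomials.\<close>

type_synonym monom = "(nat \<times> nat) \<Rightarrow>\<^sub>0 nat"
type_synonym 'a mpoly = "monom \<Rightarrow>\<^sub>0 'a"

definition var_index :: "nat \<Rightarrow> (nat \<times> nat) set" where
  "var_index n = {(i, j). 1 \<le> i \<and> i < j \<and> j \<le> n}"

definition xmon :: "nat \<Rightarrow> nat \<Rightarrow> monom" where
  "xmon i j = Poly_Mapping.single (i, j) 1"

definition xvar :: "nat \<Rightarrow> nat \<Rightarrow> 'a::comm_ring_1 mpoly" where
  "xvar i j = Poly_Mapping.single (xmon i j) 1"

definition const :: "'a::comm_ring_1 \<Rightarrow> 'a mpoly" where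
  "const c = Poly_Mapping.single 0 c"

definition is_monomial_X :: "nat \<Rightarrow> monom \<Rightarrow> bool" where
  "is_monomial_X n m \<longleftrightarrow> Poly_Mapping.keys m \<subseteq> var_index n"

definition polyX :: "nat \<Rightarrow> 'a::comm_ring_1 mpoly set" where
  "polyX n = {p. \<forall>m \<in> Poly_Mapping.keys p. is_monomial_X n m}"

definition mon_dvd :: "monom \<Rightarrow> monom \<Rightarrow> bool" where
  "mon_dvd a b \<longleftrightarrow> (\<forall>v. Poly_Mapping.lookup a v \<le> Poly_Mapping.lookup b v)"

definition forkless_mon :: "nat \<Rightarrow> monom \<Rightarrow> bool" where
  "forkless_mon n m \<longleftrightarrow>
     \<not> (\<exists>i j k. 1 \<le> i \<and> i < j \<and> j < k \<and> k \<le> n \<and> mon_dvd (xmon i j + xmon i k) m)"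

definition forkless :: "nat \<Rightarrow> 'a::comm_ring_1 mpoly \<Rightarrow> bool" where
  "forkless n p \<longleftrightarrow> (\<forall>m \<in> Poly_Mapping.keys p. forkless_mon n m)"

definition gens :: "nat \<Rightarrow> 'a::comm_ring_1 \<Rightarrow> 'a \<Rightarrow> 'a mpoly set" where
  "gens n \<beta> \<alpha> = {xvar i j * xvar j k - xvar i k * (xvar i j + xvar j k + const \<beta>) - const \<alpha>
                  | i j k. 1 \<le> i \<and> i < j \<and> j < k \<and> k \<le> n}"

definition idealJ :: "nat \<Rightarrow> 'a::comm_ring_1 \<Rightarrow> 'a \<Rightarrow> 'a mpoly set" where
  "idealJ n \<beta> \<alpha> = {(\<Sum>g\<in>S. c g * g) | S c. finite S \<and> S \<subseteq> gens n \<beta> \<alpha> \<and> (\<forall>g\<in>S. c g \<in> polyX n)}"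

end

theory Submission
  imports Defs
begin

text \<open>Orient each generator of J as a rule rewriting the fork x_ij x_ik (i < j < k) to
  x_ij x_jk - x_ik x_jk - \<beta> x_ik - \<alpha>. Giving x_ij the weight n + 1 - i makes every rule
  weight-decreasing, so reduction terminates in a forkless polynomial congruent to p. Uniqueness
  is Bergman's diamond lemma: forks in disjoint variables can be reduced in either order, and two
  overlapping forks sit inside some x_ij x_ik x_il, where the two reductions differ by an explicit
  combination of lighter multiples of generators. Hence the linear extension of the normal form
  of monomials vanishes on J and fixes every forkless polynomial.\<close>

definition mon_poly :: "monom \<Rightarrow> 'a::comm_ring_1 mpoly" where
  "mon_poly m = Poly_Mapping.single m 1"

definition mpoly_extend :: "(monom \<Rightarrow> 'a::comm_ring_1 mpoly) \<Rightarrow> 'a mpoly \<Rightarrow> 'a mpoly" where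
  "mpoly_extend f p = (\<Sum>m\<in>Poly_Mapping.keys p. const (Poly_Mapping.lookup p m) * f m)"

lemma const_0 [simp]: "const 0 = 0"
  by (simp add: const_def)

lemma const_add: "const (a + b) = const a + const b"
  by (simp add: const_def single_add)

lemma const_uminus: "const (- a) = - const a"
  by (simp add: const_def single_uminus)

lemma const_mult_const: "const a * const b = const (a * b)"
  by (simp add: const_def mult_single)

lemma keys_const: "Poly_Mapping.keys (const c) \<subseteq> {0}"
  by (simp add: const_def)

lemma lookup_const_mult: "Poly_Mapping.lookup (const c * p) m = c * Poly_Mapping.lookup p m"
  unfolding const_def by (simp add: mult_map_scale_conv_mult[symmetric] map.rep_eq when_def)

lemma keys_const_mult: "Poly_Mapping.keys (const c * p) \<subseteq> Poly_Mapping.keys p"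
  by (auto simp: in_keys_iff lookup_const_mult)

lemma keys_mon_poly [simp]: "Poly_Mapping.keys (mon_poly m :: 'a::comm_ring_1 mpoly) = {m}"
  by (simp add: mon_poly_def)

lemma mon_poly_add: "mon_poly (a + b) = mon_poly a * mon_poly b"
  by (simp add: mon_poly_def mult_single)

lemma xvar_eq_mon_poly: "xvar i j = mon_poly (xmon i j)"
  by (simp add: xvar_def mon_poly_def)

lemma keys_xvar: "Poly_Mapping.keys (xvar i j) = {xmon i j}"
  by (simp add: xvar_eq_mon_poly)

lemma keys_mon_poly_mult:
  "Poly_Mapping.keys (mon_poly u * q) \<subseteq> (\<lambda>s. u + s) ` Poly_Mapping.keys q"
  using keys_mult[of "mon_poly u" q] by auto

lemma single_eq_const_mult_mon_poly: "Poly_Mapping.single m c = const c * mon_poly m"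
  by (simp add: const_def mon_poly_def mult_single)

lemma mpoly_expansion: "p = (\<Sum>m\<in>Poly_Mapping.keys p. const (Poly_Mapping.lookup p m) * mon_poly m)"
  by (rule poly_mapping_eqI)
     (simp add: lookup_sum single_eq_const_mult_mon_poly[symmetric] lookup_single when_def
        in_keys_iff)

lemma mpoly_extend_superset:
  assumes "finite S" "Poly_Mapping.keys p \<subseteq> S"
  shows "mpoly_extend f p = (\<Sum>m\<in>S. const (Poly_Mapping.lookup p m) * f m)"
  unfolding mpoly_extend_def
  by (rule sum.mono_neutral_left) (use assms in \<open>auto simp: in_keys_iff\<close>)

lemma mpoly_extend_cong [fundef_cong]:
  "p = q \<Longrightarrow> (\<And>m. m \<in> Poly_Mapping.keys q \<Longrightarrow> f m = g m) \<Longrightarrow> mpoly_extend f p = mpoly_extend g q"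
  by (simp add: mpoly_extend_def)

lemma mpoly_extend_add: "mpoly_extend f (p + q) = mpoly_extend f p + mpoly_extend f q"
proof -
  let ?S = "Poly_Mapping.keys p \<union> Poly_Mapping.keys q"
  have "mpoly_extend f (p + q) = (\<Sum>m\<in>?S. const (Poly_Mapping.lookup (p + q) m) * f m)"
    by (rule mpoly_extend_superset) (auto simp: keys_add)
  also have "\<dots> = (\<Sum>m\<in>?S. const (Poly_Mapping.lookup p m) * f m)
                 + (\<Sum>m\<in>?S. const (Poly_Mapping.lookup q m) * f m)"
    by (simp add: lookup_add const_add distrib_right sum.distrib)
  also have "\<dots> = mpoly_extend f p + mpoly_extend f q"
    by (simp add: mpoly_extend_superset[symmetric])
  finally show ?thesis .
qed

lemma mpoly_extend_zero [simp]: "mpoly_extend f 0 = 0"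
  by (simp add: mpoly_extend_def)

lemma mpoly_extend_uminus: "mpoly_extend f (- p) = - mpoly_extend f p"
  by (simp add: mpoly_extend_def const_uminus sum_negf)

lemma mpoly_extend_diff: "mpoly_extend f (p - q) = mpoly_extend f p - mpoly_extend f q"
  using mpoly_extend_add[of f p "- q"] by (simp add: mpoly_extend_uminus)

lemma mpoly_extend_sum:
  "finite I \<Longrightarrow> mpoly_extend f (\<Sum>i\<in>I. g i) = (\<Sum>i\<in>I. mpoly_extend f (g i))"
  by (induction I rule: finite_induct) (simp_all add: mpoly_extend_add)

lemma mpoly_extend_const_mult: "mpoly_extend f (const c * p) = const c * mpoly_extend f p"
proof -
  have "mpoly_extend f (const c * p)
        = (\<Sum>m\<in>Poly_Mapping.keys p. const (Poly_Mapping.lookup (const c * p) m) * f m)"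
    by (rule mpoly_extend_superset) (auto simp: keys_const_mult)
  then show ?thesis
    by (simp add: mpoly_extend_def lookup_const_mult const_mult_const[symmetric]
        sum_distrib_left mult.assoc)
qed

lemma mpoly_extend_mon_poly [simp]: "mpoly_extend f (mon_poly m) = f m"
  by (simp add: mpoly_extend_def const_def mon_poly_def)

lemma keys_mpoly_extend:
  "Poly_Mapping.keys (mpoly_extend f p) \<subseteq> (\<Union>m\<in>Poly_Mapping.keys p. Poly_Mapping.keys (f m))"
  unfolding mpoly_extend_def using keys_sum keys_const_mult by fastforce

lemma zero_in_polyX: "0 \<in> polyX n"
  by (simp add: polyX_def)

lemma polyX_add: "p \<in> polyX n \<Longrightarrow> q \<in> polyX n \<Longrightarrow> p + q \<in> polyX n"
  using keys_add[of p q] by (auto simp: polyX_def)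

lemma polyX_const_mult: "p \<in> polyX n \<Longrightarrow> const c * p \<in> polyX n"
  using keys_const_mult[of c p] by (auto simp: polyX_def)

lemma zero_in_idealJ: "0 \<in> idealJ n \<beta> \<alpha>"
  unfolding idealJ_def by (rule CollectI, rule exI[of _ "{}"]) auto

lemma mult_gen_in_idealJ: "c \<in> polyX n \<Longrightarrow> g \<in> gens n \<beta> \<alpha> \<Longrightarrow> c * g \<in> idealJ n \<beta> \<alpha>"
  unfolding idealJ_def by (rule CollectI, rule exI[of _ "{g}"], rule exI[of _ "\<lambda>_. c"]) auto

lemma add_in_idealJ:
  assumes "x \<in> idealJ n \<beta> \<alpha>" "y \<in> idealJ n \<beta> \<alpha>"
  shows "x + y \<in> idealJ n \<beta> \<alpha>"
proof -
  obtain S1 c1 where x: "x = (\<Sum>g\<in>S1. c1 g * g)" "finite S1" "S1 \<subseteq> gens n \<beta> \<alpha>"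
      "\<forall>g\<in>S1. c1 g \<in> polyX n"
    using assms(1) unfolding idealJ_def by blast
  obtain S2 c2 where y: "y = (\<Sum>g\<in>S2. c2 g * g)" "finite S2" "S2 \<subseteq> gens n \<beta> \<alpha>"
      "\<forall>g\<in>S2. c2 g \<in> polyX n"
    using assms(2) unfolding idealJ_def by blast
  define c where "c g = (if g \<in> S1 then c1 g else 0) + (if g \<in> S2 then c2 g else 0)" for g
  have "(\<Sum>g\<in>S1 \<union> S2. (if g \<in> S1 then c1 g else 0) * g) = (\<Sum>g\<in>S1. c1 g * g)"
    by (rule sum.mono_neutral_cong_right) (use x y in auto)
  moreover have "(\<Sum>g\<in>S1 \<union> S2. (if g \<in> S2 then c2 g else 0) * g) = (\<Sum>g\<in>S2. c2 g * g)"
    by (rule sum.mono_neutral_cong_right) (use x y in auto)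
  ultimately have "x + y = (\<Sum>g\<in>S1 \<union> S2. c g * g)"
    by (simp add: c_def distrib_right sum.distrib x(1) y(1))
  moreover have "\<forall>g\<in>S1 \<union> S2. c g \<in> polyX n"
    using x(4) y(4) by (auto simp: c_def intro!: polyX_add zero_in_polyX)
  ultimately show ?thesis
    unfolding idealJ_def using x(2,3) y(2,3) by blast
qed

lemma const_mult_in_idealJ:
  assumes "x \<in> idealJ n \<beta> \<alpha>"
  shows "const c * x \<in> idealJ n \<beta> \<alpha>"
proof -
  obtain S d where x: "x = (\<Sum>g\<in>S. d g * g)" "finite S" "S \<subseteq> gens n \<beta> \<alpha>"
      "\<forall>g\<in>S. d g \<in> polyX n"
    using assms unfolding idealJ_def by blast
  have "const c * x = (\<Sum>g\<in>S. (const c * d g) * g)"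
    by (simp add: x(1) sum_distrib_left mult.assoc)
  with x(2-4) show ?thesis
    unfolding idealJ_def mem_Collect_eq
    by (intro exI[of _ S] exI[of _ "\<lambda>g. const c * d g"]) (simp add: polyX_const_mult)
qed

lemma sum_in_idealJ:
  "finite I \<Longrightarrow> (\<And>i. i \<in> I \<Longrightarrow> f i \<in> idealJ n \<beta> \<alpha>) \<Longrightarrow> sum f I \<in> idealJ n \<beta> \<alpha>"
  by (induction I rule: finite_induct) (auto intro: zero_in_idealJ add_in_idealJ)

lemma keys_diff_monom: "Poly_Mapping.keys (A - B :: monom) \<subseteq> Poly_Mapping.keys A"
  by (auto simp: in_keys_iff lookup_minus)

lemma mon_dvd_imp_diff_add:
  assumes "mon_dvd a b"
  shows "b - a + a = b"
proof (rule poly_mapping_eqI)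
  fix v
  show "Poly_Mapping.lookup (b - a + a) v = Poly_Mapping.lookup b v"
    using assms[unfolded mon_dvd_def, rule_format, of v] by (simp add: lookup_add lookup_minus)
qed

lemma lookup_xmon: "Poly_Mapping.lookup (xmon i j) v = (if v = (i, j) then 1 else 0)"
  by (simp add: xmon_def lookup_single when_def)

lemma overlapping_pairs_in_triple:
  fixes j k j' k' :: nat
  assumes "j < k" "j' < k'" "(j, k) \<noteq> (j', k')" "{j, k} \<inter> {j', k'} \<noteq> {}"
  obtains a b c where "a < b" "b < c" "{j, k, j', k'} = {a, b, c}"
proof -
  consider "j = j'" | "k = k'" | "j = k'" | "k = j'"
    using assms(4) by blast
  then show thesis
  proof cases
    case 1
    then show thesis using assms by (intro that[of j "min k k'" "max k k'"]) auto
  next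
    case 2
    then show thesis using assms by (intro that[of "min j j'" "max j j'" k]) auto
  next
    case 3
    then show thesis using assms by (intro that[of j' j k]) auto
  next
    case 4
    then show thesis using assms by (intro that[of j k k']) auto
  qed
qed

locale fork_rewriting =
  fixes n :: nat and \<beta> \<alpha> :: "'a::comm_ring_1"
begin

definition weight :: "monom \<Rightarrow> nat" where
  "weight M = (\<Sum>v\<in>Poly_Mapping.keys M. Poly_Mapping.lookup M v * (n + 1 - fst v))"

lemma weight_add: "weight (A + B) = weight A + weight B"
  unfolding weight_def by (rule setsum_keys_plus_distrib) (simp_all add: distrib_right)

lemma weight_zero [simp]: "weight 0 = 0"
  by (simp add: weight_def)

lemma weight_xmon [simp]: "weight (xmon i j) = n + 1 - i"
  by (simp add: weight_def xmon_def)

definition fork_monom :: "nat \<Rightarrow> nat \<Rightarrow> nat \<Rightarrow> monom" where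
  "fork_monom i j k = xmon i j + xmon i k"

definition fork_rhs :: "nat \<Rightarrow> nat \<Rightarrow> nat \<Rightarrow> 'a mpoly" where
  "fork_rhs i j k = xvar i j * xvar j k - xvar i k * xvar j k - const \<beta> * xvar i k - const \<alpha>"

definition fork_gen :: "nat \<Rightarrow> nat \<Rightarrow> nat \<Rightarrow> 'a mpoly" where
  "fork_gen i j k = mon_poly (fork_monom i j k) - fork_rhs i j k"

definition forks :: "monom \<Rightarrow> (nat \<times> nat \<times> nat) set" where
  "forks M = {(i, j, k). 1 \<le> i \<and> i < j \<and> j < k \<and> k \<le> n \<and> mon_dvd (fork_monom i j k) M}"

fun reduce :: "nat \<times> nat \<times> nat \<Rightarrow> monom \<Rightarrow> 'a mpoly" where
  "reduce (i, j, k) M = mon_poly (M - fork_monom i j k) * fork_rhs i j k"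

lemma mon_poly_fork_monom: "mon_poly (fork_monom i j k) = xvar i j * xvar i k"
  by (simp add: fork_monom_def mon_poly_add xvar_eq_mon_poly)

lemma gens_eq: "gens n \<beta> \<alpha> = {- fork_gen i j k | i j k. 1 \<le> i \<and> i < j \<and> j < k \<and> k \<le> n}"
  unfolding gens_def fork_gen_def fork_rhs_def mon_poly_fork_monom by (simp add: algebra_simps)

lemma mem_forks_iff:
  "(i, j, k) \<in> forks M \<longleftrightarrow> 1 \<le> i \<and> i < j \<and> j < k \<and> k \<le> n
     \<and> 0 < Poly_Mapping.lookup M (i, j) \<and> 0 < Poly_Mapping.lookup M (i, k)"
  by (auto simp: forks_def mon_dvd_def fork_monom_def lookup_add lookup_xmon Suc_le_eq)

lemma forkless_mon_iff: "forkless_mon n M \<longleftrightarrow> forks M = {}"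
  by (auto simp: forkless_mon_def forks_def fork_monom_def)

lemma keys_fork_rhs:
  "Poly_Mapping.keys (fork_rhs i j k) \<subseteq> {xmon i j + xmon j k, xmon i k + xmon j k, xmon i k, 0}"
proof -
  have "fork_rhs i j k = mon_poly (xmon i j + xmon j k) - mon_poly (xmon i k + xmon j k)
          - Poly_Mapping.single (xmon i k) \<beta> - Poly_Mapping.single 0 \<alpha>"
    by (simp add: fork_rhs_def mon_poly_add xvar_eq_mon_poly const_def mon_poly_def mult_single)
  then show ?thesis
    by (auto simp: in_keys_iff lookup_minus mon_poly_def lookup_single when_def split: if_splits)
qed

text \<open>Row i carries weight n + 1 - i, so a fork outweighs every monomial of its rewrite.\<close>
lemma weight_mon_poly_mult_fork_rhs:
  assumes "i < j" "j < k" "k \<le> n" "t \<in> Poly_Mapping.keys (mon_poly u * fork_rhs i j k)"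
  shows "weight t < weight (u + fork_monom i j k)"
proof -
  obtain s where "t = u + s" and s: "s \<in> Poly_Mapping.keys (fork_rhs i j k)"
    using keys_mon_poly_mult assms(4) by blast
  moreover have "weight s < weight (fork_monom i j k)"
    using s keys_fork_rhs[of i j k] assms(1-3) by (auto simp: weight_add fork_monom_def)
  ultimately show ?thesis by (simp add: weight_add)
qed

lemma diff_fork_monom_add: "(i, j, k) \<in> forks M \<Longrightarrow> M - fork_monom i j k + fork_monom i j k = M"
  by (simp add: forks_def mon_dvd_imp_diff_add)

lemma weight_reduce_less:
  assumes "f \<in> forks M" "m \<in> Poly_Mapping.keys (reduce f M)"
  shows "weight m < weight M"
proof -
  obtain i j k where f: "f = (i, j, k)" by (cases f) auto
  have "weight m < weight (M - fork_monom i j k + fork_monom i j k)"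
    by (rule weight_mon_poly_mult_fork_rhs) (use assms in \<open>auto simp: f forks_def\<close>)
  then show ?thesis using diff_fork_monom_add assms(1) f by simp
qed

lemma reduce_monomial_X:
  assumes "f \<in> forks M" "is_monomial_X n M" "m \<in> Poly_Mapping.keys (reduce f M)"
  shows "is_monomial_X n m"
proof -
  obtain i j k where f: "f = (i, j, k)" by (cases f) auto
  then have ijk: "1 \<le> i" "i < j" "j < k" "k \<le> n"
    using assms(1) by (auto simp: forks_def)
  obtain s where m: "m = M - fork_monom i j k + s" and s: "s \<in> Poly_Mapping.keys (fork_rhs i j k)"
    using keys_mon_poly_mult assms(3) f by fastforce
  have "Poly_Mapping.keys s \<subseteq> var_index n"
    using s keys_fork_rhs[of i j k] ijk
    by (auto simp: var_index_def xmon_def dest!: set_mp[OF keys_add])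
  moreover have "Poly_Mapping.keys (M - fork_monom i j k) \<subseteq> var_index n"
    using keys_diff_monom assms(2) by (auto simp: is_monomial_X_def)
  ultimately show ?thesis
    using keys_add[of "M - fork_monom i j k" s] by (auto simp: is_monomial_X_def m)
qed

lemma mon_poly_mult_fork_gen:
  "mon_poly t * fork_gen i j k
     = mon_poly (t + fork_monom i j k) - reduce (i, j, k) (t + fork_monom i j k)"
  by (simp add: fork_gen_def mon_poly_add algebra_simps)

function nf :: "monom \<Rightarrow> 'a mpoly" where
  "nf M = (if forks M = {} then mon_poly M
           else mpoly_extend nf (reduce (SOME f. f \<in> forks M) M))"
  by auto
termination
proof (relation "measure weight")
  fix M m
  assume "forks M \<noteq> {}" "m \<in> Poly_Mapping.keys (reduce (SOME f. f \<in> forks M) M)"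
  then show "(m, M) \<in> measure weight"
    by (auto intro: weight_reduce_less some_in_eq[THEN iffD2])
qed simp

declare nf.simps [simp del]

abbreviation nf_poly :: "'a mpoly \<Rightarrow> 'a mpoly" where
  "nf_poly \<equiv> mpoly_extend nf"

lemma nf_forkless: "forks M = {} \<Longrightarrow> nf M = mon_poly M"
  by (simp add: nf.simps)

lemma nf_some_fork: "forks M \<noteq> {} \<Longrightarrow> nf M = nf_poly (reduce (SOME f. f \<in> forks M) M)"
  by (subst nf.simps) simp

definition confluent_below :: "nat \<Rightarrow> bool" where
  "confluent_below W \<longleftrightarrow>
     (\<forall>M f. weight M < W \<longrightarrow> f \<in> forks M \<longrightarrow> nf M = nf_poly (reduce f M))"

lemma nf_poly_mult_fork_gen:
  assumes conf: "confluent_below W" and ijk: "1 \<le> i" "i < j" "j < k" "k \<le> n"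
    and light: "\<And>t. t \<in> Poly_Mapping.keys c \<Longrightarrow> weight (t + fork_monom i j k) < W"
  shows "nf_poly (c * fork_gen i j k) = 0"
proof -
  have "nf_poly (mon_poly t * fork_gen i j k) = 0" if "t \<in> Poly_Mapping.keys c" for t
  proof -
    have "(i, j, k) \<in> forks (t + fork_monom i j k)"
      using ijk by (simp add: mem_forks_iff fork_monom_def lookup_add lookup_xmon)
    then have "nf (t + fork_monom i j k) = nf_poly (reduce (i, j, k) (t + fork_monom i j k))"
      using conf light[OF that] by (simp add: confluent_below_def)
    then show ?thesis
      by (simp add: mon_poly_mult_fork_gen mpoly_extend_diff)
  qed
  moreover have "c * fork_gen i j k
      = (\<Sum>t\<in>Poly_Mapping.keys c.
           const (Poly_Mapping.lookup c t) * (mon_poly t * fork_gen i j k))"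
    by (subst mpoly_expansion[of c]) (simp add: sum_distrib_right mult.assoc)
  ultimately show ?thesis
    by (simp add: mpoly_extend_sum mpoly_extend_const_mult)
qed

lemma nf_poly_reduce_disjoint_forks:
  assumes conf: "confluent_below (weight M)"
    and f: "(i, j, k) \<in> forks M" and g: "(i', j', k') \<in> forks M"
    and disjoint: "i \<noteq> i' \<or> {j, k} \<inter> {j', k'} = {}"
  shows "nf_poly (reduce (i, j, k) M) = nf_poly (reduce (i', j', k') M)"
proof -
  define L where "L = fork_monom i j k"
  define L' where "L' = fork_monom i' j' k'"
  define u where "u = M - (L + L')"
  have M: "M = u + L + L'"
    by (rule poly_mapping_eqI)
       (use f g disjoint in \<open>auto simp: mem_forks_iff u_def L_def L'_def fork_monom_def
          lookup_add lookup_minus lookup_xmon\<close>)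
  have ijk: "1 \<le> i" "i < j" "j < k" "k \<le> n" and ijk': "1 \<le> i'" "i' < j'" "j' < k'" "k' \<le> n"
    using f g by (auto simp: mem_forks_iff)
  have "M - L = u + L'" "M - L' = u + L"
    by (metis M add.commute add.assoc add_diff_cancel_right')+
  then have "reduce (i, j, k) M - reduce (i', j', k') M
      = mon_poly u * fork_rhs i j k * fork_gen i' j' k'
        - mon_poly u * fork_rhs i' j' k' * fork_gen i j k"
    by (simp add: L_def L'_def fork_gen_def mon_poly_add algebra_simps)
  moreover have "nf_poly (mon_poly u * fork_rhs i j k * fork_gen i' j' k') = 0"
    using nf_poly_mult_fork_gen[OF conf ijk'] weight_mon_poly_mult_fork_rhs[OF ijk(2-4)]
    by (fastforce simp: M weight_add L_def L'_def)
  moreover have "nf_poly (mon_poly u * fork_rhs i' j' k' * fork_gen i j k) = 0"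
    using nf_poly_mult_fork_gen[OF conf ijk] weight_mon_poly_mult_fork_rhs[OF ijk'(2-4)]
    by (fastforce simp: M weight_add L_def L'_def)
  ultimately show ?thesis
    by (metis mpoly_extend_diff diff_zero eq_iff_diff_eq_0)
qed

text \<open>The two ways of resolving the overlap of forks in x_ij x_ik x_il differ by combinations
  of generators whose leading monomials are lighter than x_ij x_ik x_il.\<close>
lemma fork_syzygy_ijl:
  "xvar i k * fork_rhs i j l - xvar i l * fork_rhs i j k
     = xvar j k * fork_gen i k l - xvar j k * fork_gen i j l + xvar j l * fork_gen i j k
       - xvar j l * fork_gen i k l + xvar i l * fork_gen j k l - xvar i k * fork_gen j k l"
  by (simp add: fork_gen_def fork_rhs_def mon_poly_fork_monom algebra_simps)

lemma fork_syzygy_ikl: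
  "xvar i j * fork_rhs i k l - xvar i l * fork_rhs i j k
     = xvar j k * fork_gen i k l - xvar j k * fork_gen i j l + const \<beta> * fork_gen i k l
       + xvar k l * fork_gen i j k - xvar k l * fork_gen i j l - const \<beta> * fork_gen i j l
       - xvar i j * fork_gen j k l + xvar i l * fork_gen j k l"
  by (simp add: fork_gen_def fork_rhs_def mon_poly_fork_monom algebra_simps)

lemma nf_poly_reduce_overlapping_forks:
  assumes conf: "confluent_below (weight M)"
    and ijkl: "1 \<le> i" "i < j" "j < k" "k < l" "l \<le> n"
    and divides: "0 < Poly_Mapping.lookup M (i, j)" "0 < Poly_Mapping.lookup M (i, k)"
      "0 < Poly_Mapping.lookup M (i, l)"
  shows "nf_poly (reduce (i, j, l) M) = nf_poly (reduce (i, j, k) M)"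
    and "nf_poly (reduce (i, k, l) M) = nf_poly (reduce (i, j, k) M)"
proof -
  define T where "T = xmon i j + xmon i k + xmon i l"
  define u where "u = M - T"
  have M: "M = u + T"
    by (rule poly_mapping_eqI)
       (use ijkl divides in \<open>auto simp: u_def T_def lookup_add lookup_minus lookup_xmon\<close>)
  have "M - fork_monom i j k = u + xmon i l" "M - fork_monom i j l = u + xmon i k"
    "M - fork_monom i k l = u + xmon i j"
    by (rule poly_mapping_eqI;
        use ijkl in \<open>auto simp: M T_def fork_monom_def lookup_add lookup_minus lookup_xmon\<close>)+
  then have reduce_M: "reduce (i, j, k) M = mon_poly u * (xvar i l * fork_rhs i j k)"
    "reduce (i, j, l) M = mon_poly u * (xvar i k * fork_rhs i j l)"
    "reduce (i, k, l) M = mon_poly u * (xvar i j * fork_rhs i k l)"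
    by (simp_all add: mon_poly_add xvar_eq_mon_poly mult.assoc)
  have killed: "nf_poly (mon_poly u * (c * fork_gen p q r)) = 0"
    if "1 \<le> p" "p < q" "q < r" "r \<le> n"
      and "\<And>s. s \<in> Poly_Mapping.keys c \<Longrightarrow> weight (s + fork_monom p q r) < weight T" for c p q r
    unfolding mult.assoc[symmetric]
  proof (rule nf_poly_mult_fork_gen[OF conf that(1-4)])
    fix t assume "t \<in> Poly_Mapping.keys (mon_poly u * c)"
    then obtain s where "t = u + s" "s \<in> Poly_Mapping.keys c"
      using keys_mon_poly_mult by blast
    then show "weight (t + fork_monom p q r) < weight M"
      using that(5) by (simp add: M weight_add)
  qed
  have killed_xvar: "nf_poly (mon_poly u * (xvar a b * fork_gen p q r)) = 0"
    if "1 \<le> p" "p < q" "q < r" "r \<le> n" "weight (xmon a b + fork_monom p q r) < weight T"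
    for a b p q r
    using that by (intro killed) (auto simp: keys_xvar)
  have killed_const: "nf_poly (mon_poly u * (const \<beta> * fork_gen p q r)) = 0"
    if "1 \<le> p" "p < q" "q < r" "r \<le> n" "weight (fork_monom p q r) < weight T" for p q r
    using that by (intro killed) (auto dest: subsetD[OF keys_const])
  show "nf_poly (reduce (i, j, l) M) = nf_poly (reduce (i, j, k) M)"
  proof -
    have "nf_poly (reduce (i, j, l) M) - nf_poly (reduce (i, j, k) M)
        = nf_poly (mon_poly u * (xvar i k * fork_rhs i j l - xvar i l * fork_rhs i j k))"
      by (simp only: reduce_M mpoly_extend_diff right_diff_distrib)
    also have "\<dots> = 0"
      unfolding fork_syzygy_ijl using ijkl
      by (simp add: distrib_left right_diff_distrib mpoly_extend_add mpoly_extend_diff killed_xvar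
          T_def fork_monom_def weight_add)
    finally show ?thesis by simp
  qed
  show "nf_poly (reduce (i, k, l) M) = nf_poly (reduce (i, j, k) M)"
  proof -
    have "nf_poly (reduce (i, k, l) M) - nf_poly (reduce (i, j, k) M)
        = nf_poly (mon_poly u * (xvar i j * fork_rhs i k l - xvar i l * fork_rhs i j k))"
      by (simp only: reduce_M mpoly_extend_diff right_diff_distrib)
    also have "\<dots> = 0"
      unfolding fork_syzygy_ikl using ijkl
      by (simp add: distrib_left right_diff_distrib mpoly_extend_add mpoly_extend_diff killed_xvar
          killed_const T_def fork_monom_def weight_add)
    finally show ?thesis by simp
  qed
qed

lemma nf_poly_reduce_same_row:
  assumes conf: "confluent_below (weight M)"
    and f: "(i, j, k) \<in> forks M" and g: "(i, j', k') \<in> forks M"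
    and overlap: "{j, k} \<inter> {j', k'} \<noteq> {}"
  shows "nf_poly (reduce (i, j, k) M) = nf_poly (reduce (i, j', k') M)"
proof (cases "(j, k) = (j', k')")
  case False
  have jk: "j < k" "j' < k'" using f g by (auto simp: mem_forks_iff)
  obtain a b c where abc: "a < b" "b < c" and eq: "{j, k, j', k'} = {a, b, c}"
    using overlapping_pairs_in_triple[OF jk False overlap] .
  have "a \<in> {j, k, j', k'}" "b \<in> {j, k, j', k'}" "c \<in> {j, k, j', k'}"
    unfolding eq by simp_all
  then have ijkl: "1 \<le> i" "i < a" "a < b" "b < c" "c \<le> n"
    and divides: "0 < Poly_Mapping.lookup M (i, a)" "0 < Poly_Mapping.lookup M (i, b)"
      "0 < Poly_Mapping.lookup M (i, c)"
    using f g abc by (auto simp: mem_forks_iff)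
  have "nf_poly (reduce (i, x, y) M) = nf_poly (reduce (i, a, b) M)"
    if "(x, y) \<in> {(a, b), (a, c), (b, c)}" for x y
    using that nf_poly_reduce_overlapping_forks[OF conf ijkl divides] by auto
  moreover have "(x, y) \<in> {(a, b), (a, c), (b, c)}"
    if "x \<in> {j, k, j', k'}" "y \<in> {j, k, j', k'}" "x < y" for x y
    using that abc unfolding eq by auto
  ultimately show ?thesis
    using jk by (metis insertI1 insertI2)
qed simp

lemma nf_poly_reduce_eq:
  assumes conf: "confluent_below (weight M)" and "f \<in> forks M" "g \<in> forks M"
  shows "nf_poly (reduce f M) = nf_poly (reduce g M)"
proof -
  obtain i j k i' j' k' where fg: "f = (i, j, k)" "g = (i', j', k')"
    by (cases f, cases g) auto
  have forks: "(i, j, k) \<in> forks M" "(i', j', k') \<in> forks M"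
    using assms(2,3) fg by simp_all
  show ?thesis
  proof (cases "i \<noteq> i' \<or> {j, k} \<inter> {j', k'} = {}")
    case True
    show ?thesis
      unfolding fg by (rule nf_poly_reduce_disjoint_forks[OF conf forks True])
  next
    case False
    then have "i' = i" "{j, k} \<inter> {j', k'} \<noteq> {}"
      by auto
    then show ?thesis
      using nf_poly_reduce_same_row[OF conf forks(1)] forks(2) by (simp add: fg)
  qed
qed

text \<open>The diamond lemma: the fork picked by SOME in the definition of nf is immaterial.\<close>
lemma nf_eq_nf_poly_reduce: "f \<in> forks M \<Longrightarrow> nf M = nf_poly (reduce f M)"
proof (induction "weight M" arbitrary: M f rule: less_induct)
  case less
  then have "confluent_below (weight M)"
    by (auto simp: confluent_below_def)
  moreover have "(SOME f. f \<in> forks M) \<in> forks M"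
    using less.prems by (rule someI)
  ultimately have "nf_poly (reduce (SOME f. f \<in> forks M) M) = nf_poly (reduce f M)"
    using less.prems by (rule nf_poly_reduce_eq)
  then show ?case
    using nf_some_fork[of M] less.prems by auto
qed

lemma nf_poly_mult_fork_gen_eq_0:
  assumes "1 \<le> i" "i < j" "j < k" "k \<le> n"
  shows "nf_poly (c * fork_gen i j k) = 0"
proof (rule nf_poly_mult_fork_gen[OF _ assms])
  let ?W = "Suc (\<Sum>t\<in>Poly_Mapping.keys c. weight (t + fork_monom i j k))"
  show "confluent_below ?W"
    by (simp add: confluent_below_def nf_eq_nf_poly_reduce)
  fix t assume "t \<in> Poly_Mapping.keys c"
  then show "weight (t + fork_monom i j k) < ?W"
    by (intro le_imp_less_Suc member_le_sum) auto
qed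

lemma nf_poly_idealJ:
  assumes "x \<in> idealJ n \<beta> \<alpha>"
  shows "nf_poly x = 0"
proof -
  obtain S c where x: "x = (\<Sum>g\<in>S. c g * g)" and S: "finite S" "S \<subseteq> gens n \<beta> \<alpha>"
    using assms unfolding idealJ_def by blast
  have "nf_poly (c g * g) = 0" if g: "g \<in> S" for g
  proof -
    obtain i j k where "1 \<le> i" "i < j" "j < k" "k \<le> n" "g = - fork_gen i j k"
      using g S(2) unfolding gens_eq by blast
    then show ?thesis
      using nf_poly_mult_fork_gen_eq_0[of i j k "- c g"] by simp
  qed
  then show ?thesis
    by (simp add: x mpoly_extend_sum[OF S(1)])
qed

lemma nf_poly_forkless:
  assumes "\<And>m. m \<in> Poly_Mapping.keys q \<Longrightarrow> forks m = {}"
  shows "nf_poly q = q"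
proof -
  have "nf_poly q = (\<Sum>m\<in>Poly_Mapping.keys q. const (Poly_Mapping.lookup q m) * mon_poly m)"
    unfolding mpoly_extend_def using assms by (simp add: nf_forkless)
  then show ?thesis
    using mpoly_expansion[of q] by simp
qed

lemma keys_nf:
  "is_monomial_X n M \<Longrightarrow> m \<in> Poly_Mapping.keys (nf M) \<Longrightarrow> is_monomial_X n m \<and> forks m = {}"
proof (induction M rule: nf.induct)
  case (1 M)
  show ?case
  proof (cases "forks M = {}")
    case True
    then show ?thesis using "1.prems" by (simp add: nf_forkless)
  next
    case False
    then have some: "(SOME f. f \<in> forks M) \<in> forks M"
      by (simp add: some_in_eq)
    obtain m' where m': "m' \<in> Poly_Mapping.keys (reduce (SOME f. f \<in> forks M) M)"
      and "m \<in> Poly_Mapping.keys (nf m')"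
      using "1.prems"(2) keys_mpoly_extend by (fastforce simp: nf_some_fork[OF False])
    then show ?thesis
      using "1.IH"[OF False m'] reduce_monomial_X[OF some "1.prems"(1) m'] by blast
  qed
qed

lemma minus_nf_poly_in_idealJ:
  assumes "\<And>m. m \<in> Poly_Mapping.keys p \<Longrightarrow> mon_poly m - nf m \<in> idealJ n \<beta> \<alpha>"
  shows "p - nf_poly p \<in> idealJ n \<beta> \<alpha>"
proof -
  have "p - nf_poly p
      = (\<Sum>m\<in>Poly_Mapping.keys p. const (Poly_Mapping.lookup p m) * (mon_poly m - nf m))"
    by (subst (1) mpoly_expansion) (simp add: mpoly_extend_def right_diff_distrib sum_subtractf)
  also have "\<dots> \<in> idealJ n \<beta> \<alpha>"
    by (rule sum_in_idealJ) (auto intro: const_mult_in_idealJ assms)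
  finally show ?thesis .
qed

lemma mon_poly_minus_nf_in_idealJ: "is_monomial_X n M \<Longrightarrow> mon_poly M - nf M \<in> idealJ n \<beta> \<alpha>"
proof (induction M rule: nf.induct)
  case (1 M)
  show ?case
  proof (cases "forks M = {}")
    case True
    then show ?thesis by (simp add: nf_forkless zero_in_idealJ)
  next
    case False
    define f where "f = (SOME f. f \<in> forks M)"
    have f: "f \<in> forks M"
      using False by (simp add: f_def some_in_eq)
    obtain i j k where ijk: "f = (i, j, k)" by (cases f) auto
    define u where "u = M - fork_monom i j k"
    have "mon_poly M - reduce f M = mon_poly u * fork_gen i j k"
      using diff_fork_monom_add[of i j k M] f by (simp add: ijk u_def mon_poly_mult_fork_gen)
    also have "\<dots> = (- mon_poly u) * (- fork_gen i j k)"
      by simp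
    also have "\<dots> \<in> idealJ n \<beta> \<alpha>"
      using f "1.prems" keys_diff_monom
      by (intro mult_gen_in_idealJ) (auto simp: ijk u_def gens_eq mem_forks_iff polyX_def
          is_monomial_X_def)
    finally have "mon_poly M - reduce f M \<in> idealJ n \<beta> \<alpha>" .
    moreover have "reduce f M - nf_poly (reduce f M) \<in> idealJ n \<beta> \<alpha>"
      using "1.IH"[OF False] reduce_monomial_X[OF f "1.prems"]
      by (intro minus_nf_poly_in_idealJ) (simp add: f_def)
    ultimately show ?thesis
      using add_in_idealJ by (fastforce simp: nf_some_fork[OF False] f_def)
  qed
qed

end

theorem theorem4p3:
  fixes \<beta> \<alpha> :: "'a::comm_ring_1" and n :: nat and p :: "'a mpoly"
  assumes "n \<ge> 1" and "p \<in> polyX n"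
  shows "\<exists>!q. q \<in> polyX n \<and> forkless n q \<and> p - q \<in> idealJ n \<beta> \<alpha>"
proof -
  interpret fork_rewriting n \<beta> \<alpha> .
  have p: "is_monomial_X n m" if "m \<in> Poly_Mapping.keys p" for m
    using assms(2) that by (simp add: polyX_def)
  have forkless_iff: "forkless n q \<longleftrightarrow> (\<forall>m\<in>Poly_Mapping.keys q. forks m = {})" for q :: "'a mpoly"
    by (simp add: forkless_def forkless_mon_iff)
  have "is_monomial_X n m \<and> forks m = {}" if "m \<in> Poly_Mapping.keys (nf_poly p)" for m
    using keys_mpoly_extend[of nf p] that keys_nf p by blast
  then have "nf_poly p \<in> polyX n" "forkless n (nf_poly p)"
    by (simp_all add: polyX_def forkless_iff)
  moreover have "p - nf_poly p \<in> idealJ n \<beta> \<alpha>"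
    using p by (intro minus_nf_poly_in_idealJ mon_poly_minus_nf_in_idealJ)
  moreover have "q = nf_poly p" if "forkless n q" "p - q \<in> idealJ n \<beta> \<alpha>" for q
    using nf_poly_forkless[of q] nf_poly_idealJ[OF that(2)] that(1)
    by (simp add: forkless_iff mpoly_extend_diff)
  ultimately show ?thesis
    by blast
qed

end
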